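(* Let $X,Y$ be metric spaces, $X\times Y$ equipped with the maximum metric, let $\Delta$ be a scale and $g,h$ Hausdorff functions. For any set $E\subseteq X\times Y$, $$\mathcal P^{gh}_{\Delta}(E)\ \ge\ \int^*\vec{\mathcal B}^{g}(E_x)\,d\mathcal P^{h}_{\Delta}(x).$$
   Context: In a metric space $(X,d)$: $\operatorname{gap}F=\inf\{d(x,y):x,y\in F,x\neq y\}$, $C_\delta(E)=\sup\{|F|:F\subseteq E,\operatorname{gap}F>\delta\}$. A Hausdorff function is a nondecreasing $g:(0,\infty)\to(0,\infty)$; $gh$ is the pointwise product. A scale is a set $\Delta\subseteq(0,\infty)$ with $0$ in its closure. A packing is a family $\pi=\{(x_i,r_i):i\in I\}\subseteq X\times(0,\infty)$ with $d(x_i,x_j)>r_i$ for all $i\ne j$; it is a packing of $E$ if all $x_i\in E$, $\Delta$-valued if all $r_i\in\Delta$, $\delta$-fine if all $r_i\le\delta$; $g(\pi)=\sum_ig(r_i)$. Define $\mathcal P^g_{\Delta,\delta}(E)=\sup\{g(\pi):\pi$ a $\Delta$-valued $\delta$-fine packing of $E\}$, $\mathcal P^g_{\Delta,0}(E)=\inf_{\delta>0}\mathcal P^g_{\Delta,\delta}(E)$ and $\mathcal P^g_\Delta(E)=\inf\{\sum_n\mathcal P^g_{\Delta,0}(E_n):E\subseteq\bigcup_nE_n\}$ (countable covers); $\mathcal P^h_\Delta$ restricted to Borel sets is a Borel measure. Let $\underline{\mathcal B}^g_0(E)=\liminf_{\delta\to0}C_\delta(E)g(\delta)$ and $\vec{\mathcal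 B}^g(E)=\inf\{\sup_n\underline{\mathcal B}^g_0(E_n):E_n\uparrow E\}$, where $E_n\uparrow E$ means $(E_n)$ is an increasing sequence with union $E$. $E_x=\{y\in Y:(x,y)\in E\}$. The upper integral of $f\colon X\to[0,\infty]$ is $\int^*f\,d\mu=\inf\{\int\varphi\,d\mu:\varphi\ge f\ \text{Borel measurable}\}$. *)

theory Defs
  imports "HOL-Analysis.Analysis" "HOL-Probability.Probability"
begin

text \<open>Everything is parameterised by a distance function d, so that it can be
applied both to the metric of a metric space and to the maximum metric on a product.\<close>

definition hausdorff_function :: "(real \<Rightarrow> real) \<Rightarrow> bool" where
  "hausdorff_function g \<longleftrightarrow> mono_on {0<..} g \<and> (\<forall>t>0. g t > 0)"

definition is_scale :: "real set \<Rightarrow> bool" where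
  "is_scale \<Delta> \<longleftrightarrow> \<Delta> \<subseteq> {0<..} \<and> 0 \<in> closure \<Delta>"

definition max_dist :: "('a::metric_space \<times> 'b::metric_space) \<Rightarrow> ('a \<times> 'b) \<Rightarrow> real" where
  "max_dist p q = max (dist (fst p) (fst q)) (dist (snd p) (snd q))"

text \<open>gap F, as an extended real (inf of the empty set is +infinity).\<close>
definition gap :: "('a \<Rightarrow> 'a \<Rightarrow> real) \<Rightarrow> 'a set \<Rightarrow> ereal" where
  "gap d F = Inf {ereal (d x y) | x y. x \<in> F \<and> y \<in> F \<and> x \<noteq> y}"

definition Cdelta :: "('a \<Rightarrow> 'a \<Rightarrow> real) \<Rightarrow> real \<Rightarrow> 'a set \<Rightarrow> ennreal" where
  "Cdelta d \<delta> E = (SUP F \<in> {F. F \<subseteq> E \<and> gap d F > ereal \<delta>}.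
      (if finite F then of_nat (card F) else \<infinity>))"

text \<open>A packing {(x_i,r_i)} has pairwise distinct centres (since d(x_i,x_j) > r_i > 0),
so it is represented by its set of centres S and a radius function r.\<close>
definition is_packing :: "('a \<Rightarrow> 'a \<Rightarrow> real) \<Rightarrow> 'a set \<Rightarrow> ('a \<Rightarrow> real) \<Rightarrow> bool" where
  "is_packing d S r \<longleftrightarrow> (\<forall>x\<in>S. r x > 0) \<and> (\<forall>x\<in>S. \<forall>y\<in>S. x \<noteq> y \<longrightarrow> d x y > r x)"

definition packing_value :: "(real \<Rightarrow> real) \<Rightarrow> 'a set \<Rightarrow> ('a \<Rightarrow> real) \<Rightarrow> ennreal" where
  "packing_value g S r = (SUP F \<in> {F. finite F \<and> F \<subseteq> S}. \<Sum>x\<in>F. ennreal (g (r x)))"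

definition pack_delta :: "(real \<Rightarrow> real) \<Rightarrow> real set \<Rightarrow> ('a \<Rightarrow> 'a \<Rightarrow> real) \<Rightarrow> real \<Rightarrow> 'a set \<Rightarrow> ennreal" where
  "pack_delta g \<Delta> d \<delta> E = (SUP (S, r) \<in> {(S, r). is_packing d S r \<and> S \<subseteq> E \<and>
       (\<forall>x\<in>S. r x \<in> \<Delta> \<and> r x \<le> \<delta>)}. packing_value g S r)"

definition pack_zero :: "(real \<Rightarrow> real) \<Rightarrow> real set \<Rightarrow> ('a \<Rightarrow> 'a \<Rightarrow> real) \<Rightarrow> 'a set \<Rightarrow> ennreal" where
  "pack_zero g \<Delta> d E = (INF \<delta> \<in> {0<..}. pack_delta g \<Delta> d \<delta> E)"

definition packing_outer :: "(real \<Rightarrow> real) \<Rightarrow> real set \<Rightarrow> ('a \<Rightarrow> 'a \<Rightarrow> real) \<Rightarrow> 'a set \<Rightarrow> ennreal" where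
  "packing_outer g \<Delta> d E = (INF En \<in> {En :: nat \<Rightarrow> 'a set. E \<subseteq> (\<Union>n. En n)}.
       (\<Sum>n. pack_zero g \<Delta> d (En n)))"

definition packing_measure :: "(real \<Rightarrow> real) \<Rightarrow> real set \<Rightarrow> 'a::metric_space measure" where
  "packing_measure h \<Delta> = measure_of UNIV (sets borel) (packing_outer h \<Delta> dist)"

definition lower_box0 :: "(real \<Rightarrow> real) \<Rightarrow> ('a \<Rightarrow> 'a \<Rightarrow> real) \<Rightarrow> 'a set \<Rightarrow> ennreal" where
  "lower_box0 g d E = Liminf (at_right 0) (\<lambda>\<delta>. Cdelta d \<delta> E * ennreal (g \<delta>))"

definition upper_box_reg :: "(real \<Rightarrow> real) \<Rightarrow> ('a \<Rightarrow> 'a \<Rightarrow> real) \<Rightarrow> 'a set \<Rightarrow> ennreal" where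
  "upper_box_reg g d E = (INF En \<in> {En :: nat \<Rightarrow> 'a set. incseq En \<and> (\<Union>n. En n) = E}.
       (SUP n. lower_box0 g d (En n)))"

definition section_set :: "('a \<times> 'b) set \<Rightarrow> 'a \<Rightarrow> 'b set" where
  "section_set E x = {y. (x, y) \<in> E}"

definition upper_integral :: "'a measure \<Rightarrow> ('a \<Rightarrow> ennreal) \<Rightarrow> ennreal" where
  "upper_integral M f = (INF \<phi> \<in> {\<phi> \<in> borel_measurable M. \<forall>x\<in>space M. f x \<le> \<phi> x}.
       integral\<^sup>N M \<phi>)"

end

theory Submission
  imports Defs
begin

text \<open>Fix a countable cover \<open>(E\<^sub>n)\<close> of \<open>E\<close> and put \<open>G\<^sub>m = E \<inter> (E\<^sub>0 \<union> \<dots> \<union> E\<^sub>m)\<close>.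
  If \<open>x\<^sub>i\<close> are the centres of a fine packing of \<open>X\<close> with radii \<open>r\<^sub>i\<close>, then \<open>r\<^sub>i\<close>-separated finite
  subsets of the sections \<open>(G\<^sub>m)\<^sub>x\<^sub>i\<close> together form a packing of \<open>G\<^sub>m\<close> in the maximum metric with the
  same radii. Hence the infimum \<open>T(x)\<close> of \<open>C\<^sub>\<delta>((G\<^sub>m)\<^sub>x) g(\<delta>)\<close> over \<open>0 < \<delta> < 1/(m+1)\<close> satisfies
  \<open>\<Sum>\<^sub>i T(x\<^sub>i) h(r\<^sub>i) \<le> K + \<epsilon>\<close> for all sufficiently fine packings, with \<open>K = \<Sum>\<^sub>n P\<^sup>g\<^sup>h\<^sub>\<Delta>\<^sub>,\<^sub>0(E\<^sub>n)\<close>;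
  as \<open>m \<rightarrow> \<infinity>\<close> these functions increase to a majorant of the integrand.

  Such a packing bound gives \<open>\<integral>\<^sup>* T dP\<^sup>h\<^sub>\<Delta> \<le> K\<close>: cut \<open>X\<close> along the closures \<open>C\<^sub>j\<close> of the level sets
  \<open>{T > c q\<^sup>j}\<close>. Finitely many layers \<open>C\<^sub>j - C\<^sub>j\<^sub>+\<^sub>1\<close> are approximated from inside by pieces at positive
  distance from each other, which can be packed simultaneously, so \<open>\<Sum>\<^sub>j c q\<^sup>j P\<^sup>h\<^sub>\<Delta>(C\<^sub>j - C\<^sub>j\<^sub>+\<^sub>1) \<le> K\<close>,
  and \<open>T \<le> \<Sum>\<^sub>j c q\<^sup>j\<^sup>+\<^sup>1 1\<^bsub>C\<^sub>j - C\<^sub>j\<^sub>+\<^sub>1\<^esub>\<close> off a null set. Letting \<open>q \<rightarrow> 1\<close>, and then \<open>m \<rightarrow> \<infinity>\<close> by monotone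
  convergence for upper integrals, proves the theorem.\<close>

section \<open>Sums and suprema of extended nonnegative reals\<close>

lemma add_sum_SUP_le_ennreal:
  fixes f :: "'i \<Rightarrow> 'b \<Rightarrow> ennreal"
  assumes "finite I" "\<And>i. i \<in> I \<Longrightarrow> P i \<noteq> {}"
    and "\<And>p. (\<And>i. i \<in> I \<Longrightarrow> p i \<in> P i) \<Longrightarrow> c + (\<Sum>i\<in>I. f i (p i)) \<le> B"
  shows "c + (\<Sum>i\<in>I. SUP x\<in>P i. f i x) \<le> B"
  using assms
proof (induction I arbitrary: c rule: finite_induct)
  case empty
  then show ?case by simp
next
  case (insert j I)
  have "c + (\<Sum>i\<in>insert j I. SUP x\<in>P i. f i x) = (SUP x\<in>P j. (c + f j x) + (\<Sum>i\<in>I. SUP x\<in>P i. f i x))"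
    using insert.hyps insert.prems(1)
    by (simp add: ennreal_SUP_add_left[symmetric] ennreal_SUP_add_right add.assoc)
  also have "\<dots> \<le> B"
  proof (rule SUP_least, rule insert.IH)
    fix x p assume "x \<in> P j" "\<And>i. i \<in> I \<Longrightarrow> p i \<in> P i"
    then have "c + (\<Sum>i\<in>insert j I. f i ((p(j := x)) i)) \<le> B"
      by (intro insert.prems(2)) auto
    moreover have "(\<Sum>i\<in>I. f i ((p(j := x)) i)) = (\<Sum>i\<in>I. f i (p i))"
      using insert.hyps(2) by (intro sum.cong) auto
    ultimately show "c + f j x + (\<Sum>i\<in>I. f i (p i)) \<le> B"
      using insert.hyps by (simp add: add.assoc)
  qed (use insert.prems(1) in auto)
  finally show ?case .
qed

lemma sum_SUP_le_ennreal:
  fixes f :: "'i \<Rightarrow> 'b \<Rightarrow> ennreal"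
  assumes "finite I" "\<And>i. i \<in> I \<Longrightarrow> P i \<noteq> {}"
    and "\<And>p. (\<And>i. i \<in> I \<Longrightarrow> p i \<in> P i) \<Longrightarrow> (\<Sum>i\<in>I. f i (p i)) \<le> B"
  shows "(\<Sum>i\<in>I. SUP x\<in>P i. f i x) \<le> B"
  using add_sum_SUP_le_ennreal[of I P 0 f B] assms by simp

lemma ennreal_le_of_le_mult:
  fixes x K :: ennreal
  assumes "\<And>q. q > 1 \<Longrightarrow> x \<le> ennreal q * K"
  shows "x \<le> K"
proof (rule ennreal_le_epsilon)
  fix e :: real assume "K < \<top>" "0 < e"
  then obtain k where k: "k \<ge> 0" "K = ennreal k" by (cases K) auto
  define q where "q = 1 + e / (k + 1)"
  have "q > 1" using \<open>0 < e\<close> k(1) by (simp add: q_def)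
  have "q * k \<le> k + e"
    using \<open>0 < e\<close> k(1) by (simp add: q_def field_simps)
  then have "ennreal q * K \<le> K + ennreal e"
    using k \<open>q > 1\<close> \<open>0 < e\<close> by (simp add: ennreal_mult[symmetric] ennreal_plus[symmetric] del: ennreal_plus)
  then show "x \<le> K + ennreal e" using assms[OF \<open>q > 1\<close>] by (rule order_trans[rotated])
qed

lemma ennreal_eq_0_of_geometric_bound:
  fixes x K :: ennreal and c q :: real
  assumes "c > 0" "q > 1" "K < \<top>" "\<And>j. ennreal (c * q ^ j) * x \<le> K"
  shows "x = 0"
proof (rule ccontr)
  assume "x \<noteq> 0"
  obtain k where k: "k \<ge> 0" "K = ennreal k" using assms(3) by (cases K) auto
  show False
  proof (cases x)
    case top
    then have "ennreal (c * q ^ 0) * x = \<top>" using assms(1) by (simp add: ennreal_mult_top)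
    then show False using assms(3) assms(4)[of 0] by simp
  next
    case (real t)
    then have "t > 0" using \<open>x \<noteq> 0\<close> by auto
    obtain n where n: "k / (c * t) < q ^ n" using real_arch_pow[OF assms(2)] by auto
    have "c * q ^ n * t \<le> k"
      using assms(1,2) assms(4)[of n] real k \<open>t > 0\<close> by (simp add: ennreal_mult[symmetric])
    moreover have "k < c * q ^ n * t" using n assms(1) \<open>t > 0\<close> by (simp add: field_simps)
    ultimately show False by simp
  qed
qed

lemma exists_geometric_level:
  fixes c q t :: real
  assumes "c > 0" "q > 1" "c < t"
  obtains j where "c * q ^ j < t" "t \<le> c * q ^ Suc j"
proof -
  obtain n where "t / c < q ^ n" using real_arch_pow[OF assms(2)] by auto
  then have ex: "\<exists>n. t \<le> c * q ^ n" using assms(1) by (auto simp: field_simps intro: less_imp_le)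
  define m where "m = (LEAST n. t \<le> c * q ^ n)"
  have m: "t \<le> c * q ^ m" unfolding m_def by (rule LeastI_ex[OF ex])
  have "m \<noteq> 0"
  proof
    assume "m = 0"
    with m assms(3) show False by simp
  qed
  then obtain j where j: "m = Suc j" using not0_implies_Suc by blast
  then have "\<not> t \<le> c * q ^ j" using not_less_Least[of j "\<lambda>n. t \<le> c * q ^ n"] by (simp add: m_def)
  then show ?thesis using that[of j] m j by (simp add: not_le)
qed

lemma le_SUP_geometric_indicator:
  fixes T :: "'a \<Rightarrow> ennreal"
  assumes "c > 0" "q > 1" "T x = 0 \<or> ennreal c < T x"
  shows "T x \<le> (SUP j. ennreal (c * q ^ Suc j) * indicator {y. ennreal (c * q ^ j) < T y} x)"
proof (cases "T x")
  case top
  have "\<exists>j. of_nat n \<le> ennreal (c * q ^ Suc j) * indicator {y. ennreal (c * q ^ j) < T y} x" for n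
  proof -
    obtain j where "real n + 2 * c \<le> c * q ^ Suc j"
      using exists_geometric_level[OF assms(1,2), of "real n + 2 * c"] assms(1) by auto
    then have "of_nat n \<le> ennreal (c * q ^ Suc j)"
      using assms(1) by (simp add: ennreal_of_nat_eq_real_of_nat ennreal_leI)
    then show ?thesis using top by (intro exI[of _ j]) simp
  qed
  then show ?thesis using top by (simp add: ennreal_SUP_eq_top)
next
  case (real t)
  show ?thesis
  proof (cases "T x = 0")
    case False
    then have "c < t" using assms(1,3) real by (auto simp: ennreal_less_iff)
    then obtain j where j: "c * q ^ j < t" "t \<le> c * q ^ Suc j"
      using exists_geometric_level[OF assms(1,2)] by blast
    have "0 < c * q ^ j" using assms(1,2) by simp
    then have "x \<in> {y. ennreal (c * q ^ j) < T y}" using j(1) real by (simp add: ennreal_lessI)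
    then have "T x \<le> ennreal (c * q ^ Suc j) * indicator {y. ennreal (c * q ^ j) < T y} x"
      using j(2) real by (simp add: ennreal_leI del: power_Suc)
    then show ?thesis by (rule SUP_upper2[OF UNIV_I])
  qed simp
qed

lemma level_sets_antimono:
  fixes T :: "'a \<Rightarrow> ennreal"
  shows "mono l \<Longrightarrow> i \<le> j \<Longrightarrow> {x. ennreal (l j) < T x} \<subseteq> {x. ennreal (l i) < T x}"
  by (auto dest: monoD intro: le_less_trans ennreal_leI)

lemma SUP_truncate_below_ennreal:
  fixes t :: ennreal
  shows "(SUP n::nat. if ennreal (1 / Suc n) < t then t else 0) = t"
proof (rule antisym)
  show "(SUP n::nat. if ennreal (1 / Suc n) < t then t else 0) \<le> t" by (rule SUP_least) simp
  show "t \<le> (SUP n::nat. if ennreal (1 / Suc n) < t then t else 0)"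
  proof (cases "t = 0")
    case False
    have "\<exists>n::nat. ennreal (1 / Suc n) < t"
    proof (cases t)
      case (real r)
      with False have "r > 0" by auto
      then obtain n :: nat where "1 / Suc n < r"
        using reals_Archimedean by (auto simp: inverse_eq_divide)
      then show ?thesis using real \<open>r > 0\<close> by (intro exI[of _ n]) (simp add: ennreal_lessI)
    qed simp
    then obtain n :: nat where "ennreal (1 / Suc n) < t" ..
    then show ?thesis by (intro SUP_upper2[of n]) auto
  qed simp
qed

lemma SUP_indicator_decseq_le:
  fixes a :: "nat \<Rightarrow> real"
  assumes "decseq C" "mono a"
  shows "(SUP j. ennreal (a j) * indicator (C j) x)
    \<le> (\<Sum>j. ennreal (a j) * indicator (C j - C (Suc j)) x) + \<top> * indicator (\<Inter>j. C j) x"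
proof (cases "x \<in> (\<Inter>j. C j)")
  case False
  then obtain m where m: "x \<notin> C m" by blast
  show ?thesis
  proof (cases "x \<in> C 0")
    case False
    then have "x \<notin> C j" for j using decseqD[OF assms(1), of 0 j] by auto
    then show ?thesis by simp
  next
    case True
    define k where "k = (LEAST m. x \<notin> C m) - 1"
    have "x \<notin> C (Suc k)" "x \<in> C k"
      using LeastI[of "\<lambda>m. x \<notin> C m", OF m] not_less_Least[of k "\<lambda>m. x \<notin> C m"] True
      by (cases "LEAST m. x \<notin> C m"; simp add: k_def)+
    then have "ennreal (a j) * indicator (C j) x \<le> ennreal (a k)" for j
      using decseqD[OF assms(1), of "Suc k" j] monoD[OF assms(2), of j k]
      by (cases "x \<in> C j"; cases "j \<le> k") (auto intro: ennreal_leI)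
    then have "(SUP j. ennreal (a j) * indicator (C j) x) \<le> ennreal (a k) * indicator (C k - C (Suc k)) x"
      using \<open>x \<notin> C (Suc k)\<close> \<open>x \<in> C k\<close> by (simp add: SUP_least)
    also have "\<dots> \<le> (\<Sum>j. ennreal (a j) * indicator (C j - C (Suc j)) x)"
    proof -
      have "f k \<le> suminf f" for f :: "nat \<Rightarrow> ennreal"
        using sum_le_suminf[OF summableI, of "{k}" f] by simp
      then show ?thesis .
    qed
    finally show ?thesis by (rule add_increasing2[rotated]) simp
  qed
qed simp

section \<open>Packing premeasures\<close>

lemma is_packing_subset: "is_packing d S r \<Longrightarrow> F \<subseteq> S \<Longrightarrow> is_packing d F r"
  unfolding is_packing_def by (meson subsetD)

lemma sum_le_pack_delta:
  assumes "finite S" "is_packing d S r" "S \<subseteq> E" "\<forall>x\<in>S. r x \<in> \<Delta> \<and> r x \<le> \<delta>"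
  shows "(\<Sum>x\<in>S. ennreal (g (r x))) \<le> pack_delta g \<Delta> d \<delta> E"
proof -
  have "(\<Sum>x\<in>S. ennreal (g (r x))) \<le> packing_value g S r"
    unfolding packing_value_def by (rule SUP_upper) (use assms in auto)
  also have "\<dots> \<le> pack_delta g \<Delta> d \<delta> E"
    unfolding pack_delta_def by (rule SUP_upper2[where i="(S, r)"]) (use assms in auto)
  finally show ?thesis .
qed

lemma pack_delta_leI:
  assumes "\<And>S r. finite S \<Longrightarrow> is_packing d S r \<Longrightarrow> S \<subseteq> E \<Longrightarrow> \<forall>x\<in>S. r x \<in> \<Delta> \<and> r x \<le> \<delta>
     \<Longrightarrow> (\<Sum>x\<in>S. ennreal (g (r x))) \<le> B"
  shows "pack_delta g \<Delta> d \<delta> E \<le> B"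
  unfolding pack_delta_def packing_value_def
  by (intro SUP_least, clarify, intro SUP_least, clarify)
     (auto intro!: assms intro: is_packing_subset)

lemma pack_delta_eq_SUP_finite:
  "pack_delta g \<Delta> d \<delta> E = (SUP (S, r)\<in>{(S, r). finite S \<and> is_packing d S r \<and> S \<subseteq> E \<and>
     (\<forall>x\<in>S. r x \<in> \<Delta> \<and> r x \<le> \<delta>)}. \<Sum>x\<in>S. ennreal (g (r x)))"
  by (rule antisym, rule pack_delta_leI, rule SUP_upper2)
     (auto intro!: SUP_least sum_le_pack_delta)

lemma pack_delta_mono: "\<delta> \<le> \<delta>' \<Longrightarrow> E \<subseteq> E' \<Longrightarrow> pack_delta g \<Delta> d \<delta> E \<le> pack_delta g \<Delta> d \<delta>' E'"
  by (rule pack_delta_leI, rule sum_le_pack_delta) auto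

lemma pack_delta_Un: "pack_delta g \<Delta> d \<delta> (A \<union> B) \<le> pack_delta g \<Delta> d \<delta> A + pack_delta g \<Delta> d \<delta> B"
proof (rule pack_delta_leI)
  fix S r assume S: "finite S" "is_packing d S r" "S \<subseteq> A \<union> B" "\<forall>x\<in>S. r x \<in> \<Delta> \<and> r x \<le> \<delta>"
  have "(\<Sum>x\<in>S. ennreal (g (r x))) = (\<Sum>x\<in>S \<inter> A. ennreal (g (r x))) + (\<Sum>x\<in>S - A. ennreal (g (r x)))"
    using S(1) by (metis sum.Int_Diff)
  also have "\<dots> \<le> pack_delta g \<Delta> d \<delta> A + pack_delta g \<Delta> d \<delta> B"
    using S by (intro add_mono sum_le_pack_delta) (auto intro: is_packing_subset)
  finally show "(\<Sum>x\<in>S. ennreal (g (r x))) \<le> pack_delta g \<Delta> d \<delta> A + pack_delta g \<Delta> d \<delta> B" .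
qed

lemma pack_zero_le_pack_delta: "\<delta> > 0 \<Longrightarrow> pack_zero g \<Delta> d E \<le> pack_delta g \<Delta> d \<delta> E"
  unfolding pack_zero_def by (rule INF_lower) auto

lemma pack_zero_mono: "E \<subseteq> E' \<Longrightarrow> pack_zero g \<Delta> d E \<le> pack_zero g \<Delta> d E'"
  unfolding pack_zero_def by (intro INF_mono) (auto intro: pack_delta_mono)

lemma pack_zero_empty: "pack_zero g \<Delta> d {} = 0"
  using pack_zero_le_pack_delta[of 1 g \<Delta> d "{}"] pack_delta_leI[of d "{}" \<Delta> 1 g 0] by auto

lemma packing_outer_le_pack_zero: "packing_outer g \<Delta> d E \<le> pack_zero g \<Delta> d E"
proof -
  let ?En = "\<lambda>n::nat. if n = 0 then E else {}"
  have "packing_outer g \<Delta> d E \<le> (\<Sum>n. pack_zero g \<Delta> d (?En n))"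
    unfolding packing_outer_def by (rule INF_lower) (auto intro!: exI[of _ 0])
  also have "\<dots> = (\<Sum>n<1. pack_zero g \<Delta> d (?En n))"
    by (rule suminf_finite) (auto simp: pack_zero_empty)
  finally show ?thesis by simp
qed

lemma pack_zero_eq_INF_nat: "pack_zero g \<Delta> d E = (INF n::nat. pack_delta g \<Delta> d (1 / Suc n) E)"
proof (rule antisym)
  show "pack_zero g \<Delta> d E \<le> (INF n::nat. pack_delta g \<Delta> d (1 / Suc n) E)"
    by (intro INF_greatest pack_zero_le_pack_delta) simp
  show "(INF n::nat. pack_delta g \<Delta> d (1 / Suc n) E) \<le> pack_zero g \<Delta> d E"
    unfolding pack_zero_def
  proof (rule INF_greatest)
    fix \<delta> :: real assume "\<delta> \<in> {0<..}"
    then obtain n :: nat where "1 / Suc n < \<delta>"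
      using reals_Archimedean by (auto simp: inverse_eq_divide)
    then show "(INF n::nat. pack_delta g \<Delta> d (1 / Suc n) E) \<le> pack_delta g \<Delta> d \<delta> E"
      by (intro INF_lower2[of n] pack_delta_mono) auto
  qed
qed

lemma pack_zero_Un: "pack_zero g \<Delta> d (A \<union> B) \<le> pack_zero g \<Delta> d A + pack_zero g \<Delta> d B"
proof -
  have "pack_zero g \<Delta> d (A \<union> B) \<le> pack_delta g \<Delta> d (1 / Suc n) A + pack_delta g \<Delta> d (1 / Suc m) B"
    for n m :: nat
  proof -
    let ?\<delta> = "1 / real (Suc (max n m))"
    have "pack_zero g \<Delta> d (A \<union> B) \<le> pack_delta g \<Delta> d ?\<delta> A + pack_delta g \<Delta> d ?\<delta> B"
      by (rule order_trans[OF pack_zero_le_pack_delta pack_delta_Un]) simp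
    also have "\<dots> \<le> pack_delta g \<Delta> d (1 / Suc n) A + pack_delta g \<Delta> d (1 / Suc m) B"
      by (intro add_mono pack_delta_mono) (auto simp: frac_le)
    finally show ?thesis .
  qed
  then have "pack_zero g \<Delta> d (A \<union> B) \<le> (INF n. pack_delta g \<Delta> d (1 / Suc n) A) + pack_delta g \<Delta> d (1 / Suc m) B"
    for m :: nat
    unfolding INF_ennreal_add_const[symmetric] by (rule INF_greatest)
  then show ?thesis
    unfolding pack_zero_eq_INF_nat[of g \<Delta> d A] pack_zero_eq_INF_nat[of g \<Delta> d B]
      INF_ennreal_const_add[symmetric] by (rule INF_greatest)
qed

lemma pack_zero_UN_lessThan:
  fixes m :: nat
  shows "pack_zero g \<Delta> d (\<Union>n<m. A n) \<le> (\<Sum>n<m. pack_zero g \<Delta> d (A n))"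
proof (induction m)
  case 0
  then show ?case by (simp add: pack_zero_empty)
next
  case (Suc m)
  have "pack_zero g \<Delta> d (\<Union>n<Suc m. A n) \<le> pack_zero g \<Delta> d (A m) + pack_zero g \<Delta> d (\<Union>n<m. A n)"
    using pack_zero_Un[of g \<Delta> d "A m"] by (simp add: lessThan_Suc)
  with Suc show ?case by (simp add: add.commute add_left_mono order_trans)
qed

lemma is_packing_finite_margin:
  assumes "finite S" "is_packing d S r"
  obtains e where "e > 0" "\<And>x y. x \<in> S \<Longrightarrow> y \<in> S \<Longrightarrow> x \<noteq> y \<Longrightarrow> r x + e \<le> d x y"
proof -
  let ?P = "{p \<in> S \<times> S. fst p \<noteq> snd p}"
  let ?M = "insert 1 ((\<lambda>p. d (fst p) (snd p) - r (fst p)) ` ?P)"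
  have fin: "finite ?M"
    using assms(1) by simp
  have "0 < Min ?M"
    using assms(2) by (subst Min_gr_iff[OF fin]) (auto simp: is_packing_def)
  moreover have "Min ?M \<le> d x y - r x" if "x \<in> S" "y \<in> S" "x \<noteq> y" for x y
    using that by (intro Min_le[OF fin]) force
  ultimately show ?thesis by (intro that[of "Min ?M"]) fastforce+
qed

lemma is_packing_perturb:
  fixes F :: "'a::metric_space set"
  assumes "is_packing dist F r" "\<And>x y. x \<in> F \<Longrightarrow> y \<in> F \<Longrightarrow> x \<noteq> y \<Longrightarrow> r x + e \<le> dist x y"
    and "\<And>x. x \<in> F \<Longrightarrow> dist (f x) x < e / 2"
  shows "inj_on f F" "is_packing dist (f ` F) (r \<circ> the_inv_into F f)"
proof -
  have far: "r x < dist (f x) (f y)" if "x \<in> F" "y \<in> F" "x \<noteq> y" for x y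
  proof -
    have "dist x y \<le> dist (f x) x + dist (f x) y" "dist (f x) y \<le> dist (f x) (f y) + dist (f y) y"
      by (simp_all add: dist_triangle dist_triangle3)
    with assms(2)[OF that] assms(3)[OF that(1)] assms(3)[OF that(2)] show ?thesis by linarith
  qed
  have pos: "r x > 0" if "x \<in> F" for x
    using assms(1) that by (auto simp: is_packing_def)
  show inj: "inj_on f F"
  proof (rule inj_onI, rule ccontr)
    fix x y assume "x \<in> F" "y \<in> F" "f x = f y" "x \<noteq> y"
    with far[of x y] pos[of x] show False by simp
  qed
  show "is_packing dist (f ` F) (r \<circ> the_inv_into F f)"
    using far pos by (auto simp: is_packing_def the_inv_into_f_f[OF inj])
qed

lemma pack_delta_closure:
  fixes A S :: "'a::metric_space set"
  assumes "S \<subseteq> closure A"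
  shows "pack_delta g \<Delta> dist \<delta> S \<le> pack_delta g \<Delta> dist \<delta> A"
proof (rule pack_delta_leI)
  fix F r assume F: "finite F" "is_packing dist F r" "F \<subseteq> S" "\<forall>x\<in>F. r x \<in> \<Delta> \<and> r x \<le> \<delta>"
  obtain e where e: "e > 0" "\<And>x y. x \<in> F \<Longrightarrow> y \<in> F \<Longrightarrow> x \<noteq> y \<Longrightarrow> r x + e \<le> dist x y"
    using is_packing_finite_margin[OF F(1,2)] by blast
  have "\<forall>x\<in>F. \<exists>y\<in>A. dist y x < e / 2"
  proof
    fix x assume "x \<in> F"
    then have "x \<in> closure A" using F(3) assms by blast
    then show "\<exists>y\<in>A. dist y x < e / 2"
      unfolding closure_approachable using half_gt_zero[OF e(1)] by blast
  qed
  then obtain f where f: "\<And>x. x \<in> F \<Longrightarrow> f x \<in> A" "\<And>x. x \<in> F \<Longrightarrow> dist (f x) x < e / 2"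
    by metis
  note moved = is_packing_perturb[OF F(2) e(2) f(2)]
  have "(\<Sum>x\<in>F. ennreal (g (r x))) = (\<Sum>y\<in>f ` F. ennreal (g ((r \<circ> the_inv_into F f) y)))"
    using moved(1) by (simp add: sum.reindex the_inv_into_f_f)
  also have "\<dots> \<le> pack_delta g \<Delta> dist \<delta> A"
    using F f(1) moved by (intro sum_le_pack_delta) (auto simp: the_inv_into_f_f comp_def)
  finally show "(\<Sum>x\<in>F. ennreal (g (r x))) \<le> pack_delta g \<Delta> dist \<delta> A" .
qed

lemma pack_zero_closure:
  fixes A S :: "'a::metric_space set"
  shows "S \<subseteq> closure A \<Longrightarrow> pack_zero g \<Delta> dist S \<le> pack_zero g \<Delta> dist A"
  unfolding pack_zero_def by (intro INF_mono) (auto intro: pack_delta_closure)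

lemma separated_family_disjoint:
  assumes "s \<ge> 0" "\<And>i j x y. i \<in> I \<Longrightarrow> j \<in> I \<Longrightarrow> i \<noteq> j \<Longrightarrow> x \<in> F i \<Longrightarrow> y \<in> F j \<Longrightarrow> s < dist x y"
    and "i \<in> I" "j \<in> I" "x \<in> F i" "x \<in> F j"
  shows "i = j"
  using assms(1) assms(2)[of i j x x] assms(3-) by force

lemma is_packing_UN_separated:
  fixes F :: "'i \<Rightarrow> 'a::metric_space set"
  assumes sep: "\<And>i j x y. i \<in> I \<Longrightarrow> j \<in> I \<Longrightarrow> i \<noteq> j \<Longrightarrow> x \<in> F i \<Longrightarrow> y \<in> F j \<Longrightarrow> s < dist x y"
    and "s \<ge> 0" and pack: "\<And>i. i \<in> I \<Longrightarrow> is_packing dist (F i) (R i)"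
    and small: "\<And>i x. i \<in> I \<Longrightarrow> x \<in> F i \<Longrightarrow> R i x \<le> s"
  obtains r where "is_packing dist (\<Union>i\<in>I. F i) r" "\<And>i x. i \<in> I \<Longrightarrow> x \<in> F i \<Longrightarrow> r x = R i x"
proof -
  have disj: "i = j" if "i \<in> I" "j \<in> I" "x \<in> F i" "x \<in> F j" for i j x
    using \<open>s \<ge> 0\<close> sep that by (rule separated_family_disjoint)
  define r where "r x = R (SOME i. i \<in> I \<and> x \<in> F i) x" for x
  have r: "r x = R i x" if "i \<in> I" "x \<in> F i" for i x
    unfolding r_def by (rule someI2[of _ i]) (use that disj in auto)
  have "is_packing dist (\<Union>i\<in>I. F i) r"
    unfolding is_packing_def
  proof safe
    fix i x assume "i \<in> I" "x \<in> F i"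
    then show "0 < r x" using pack r by (auto simp: is_packing_def)
  next
    fix i j x y assume ij: "i \<in> I" "x \<in> F i" "j \<in> I" "y \<in> F j" "x \<noteq> y"
    show "r x < dist x y"
    proof (cases "i = j")
      case True
      then show ?thesis using pack r ij by (auto simp: is_packing_def)
    next
      case False
      then show ?thesis using sep[OF ij(1,3) False ij(2,4)] small[OF ij(1,2)] r[OF ij(1,2)] by simp
    qed
  qed
  then show thesis using r by (rule that)
qed

lemma gap_less_dist: "ereal \<delta> < gap d F \<Longrightarrow> x \<in> F \<Longrightarrow> y \<in> F \<Longrightarrow> x \<noteq> y \<Longrightarrow> \<delta> < d x y"
proof -
  assume "ereal \<delta> < gap d F" "x \<in> F" "y \<in> F" "x \<noteq> y"
  moreover from this have "gap d F \<le> ereal (d x y)"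
    unfolding gap_def by (intro Inf_lower) auto
  ultimately show "\<delta> < d x y" by (metis less_ereal.simps(1) order_less_le_trans)
qed

lemma gap_antimono: "F' \<subseteq> F \<Longrightarrow> gap d F \<le> gap d F'"
  unfolding gap_def by (rule Inf_superset_mono) auto

lemma gap_empty: "gap d {} = \<infinity>"
  by (simp add: gap_def top_ereal_def)

lemma Cdelta_eq_SUP_finite:
  "Cdelta d \<delta> E = (SUP F\<in>{F. finite F \<and> F \<subseteq> E \<and> ereal \<delta> < gap d F}. of_nat (card F))"
    (is "_ = ?S")
proof (rule antisym)
  have "\<infinity> \<le> ?S" if "F \<subseteq> E" "ereal \<delta> < gap d F" "infinite F" for F
  proof -
    have "of_nat n \<le> ?S" for n
    proof -
      obtain B where "finite B" "card B = n" "B \<subseteq> F"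
        using infinite_arbitrarily_large[OF \<open>infinite F\<close>] by blast
      with that show ?thesis
        by (intro SUP_upper2[of B]) (auto dest: gap_antimono[of _ _ d])
    qed
    then show ?thesis by (simp add: ennreal_SUP_of_nat_eq_top[symmetric] SUP_least)
  qed
  moreover have "of_nat (card F) \<le> ?S" if "F \<subseteq> E" "ereal \<delta> < gap d F" "finite F" for F
    using that by (intro SUP_upper) auto
  ultimately show "Cdelta d \<delta> E \<le> ?S"
    unfolding Cdelta_def by (intro SUP_least) auto
  show "?S \<le> Cdelta d \<delta> E"
    unfolding Cdelta_def by (rule SUP_mono) auto
qed

lemma Cdelta_mono: "E \<subseteq> E' \<Longrightarrow> Cdelta d \<delta> E \<le> Cdelta d \<delta> E'"
  unfolding Cdelta_def by (rule SUP_mono) auto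

lemma is_packing_Sigma:
  fixes S :: "'a::metric_space set" and F :: "'a \<Rightarrow> 'b::metric_space set"
  assumes "is_packing dist S r" "\<And>x. x \<in> S \<Longrightarrow> ereal (r x) < gap dist (F x)"
  shows "is_packing max_dist (Sigma S F) (r \<circ> fst)"
  unfolding is_packing_def
proof (intro conjI ballI impI)
  fix z assume "z \<in> Sigma S F"
  then show "0 < (r \<circ> fst) z" using assms(1) by (auto simp: is_packing_def)
next
  fix z w assume zw: "z \<in> Sigma S F" "w \<in> Sigma S F" "z \<noteq> w"
  obtain x y x' y' where z: "z = (x, y)" and w: "w = (x', y')" by fastforce
  show "(r \<circ> fst) z < max_dist z w"
  proof (cases "x = x'")
    case True
    then have "r x < dist y y'" using gap_less_dist[OF assms(2)] zw z w by auto
    then show ?thesis by (simp add: z w max_dist_def)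
  next
    case False
    then have "r x < dist x x'" using assms(1) zw z w by (auto simp: is_packing_def)
    then show ?thesis by (simp add: z w max_dist_def)
  qed
qed

section \<open>Upper integrals and the packing measure\<close>

text \<open>Unlike \<open>{x. s < infdist x C}\<close>, this is the whole space for empty \<open>C\<close>, which
  \<open>UN_far_from_closed\<close> needs.\<close>
definition far_from :: "'a::metric_space set \<Rightarrow> real \<Rightarrow> 'a set" where
  "far_from C s = {x. \<exists>e>s. \<forall>y\<in>C. e \<le> dist x y}"

lemma far_from_dist: "x \<in> far_from C s \<Longrightarrow> y \<in> C \<Longrightarrow> s < dist x y"
  unfolding far_from_def by force

lemma far_from_antimono: "s' \<le> s \<Longrightarrow> far_from C s \<subseteq> far_from C s'"
  unfolding far_from_def by force

lemma open_far_from: "open (far_from C s)"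
  unfolding open_dist
proof safe
  fix x assume "x \<in> far_from C s"
  then obtain e where e: "e > s" "\<forall>y\<in>C. e \<le> dist x y" by (auto simp: far_from_def)
  have "z \<in> far_from C s" if "dist z x < (e - s) / 2" for z
  proof -
    have "e - (e - s) / 2 \<le> dist z y" if "y \<in> C" for y
    proof -
      have "e \<le> dist x y" using e(2) that by blast
      then show ?thesis
        using \<open>dist z x < (e - s) / 2\<close> dist_triangle[of x y z] dist_commute[of z x] by linarith
    qed
    moreover have "s < e - (e - s) / 2" using e(1) by (simp add: field_simps)
    ultimately show ?thesis unfolding far_from_def by blast
  qed
  moreover have "0 < (e - s) / 2" using e(1) by simp
  ultimately show "\<exists>e>0. \<forall>z. dist z x < e \<longrightarrow> z \<in> far_from C s" by blast
qed

lemma UN_far_from_closed: "closed C \<Longrightarrow> (\<Union>m::nat. far_from C (1 / Suc m)) = - C"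
proof safe
  fix x m assume "x \<in> far_from C (1 / Suc m)" "x \<in> C"
  then show False using far_from_dist[of x C "1 / Suc m" x] by simp
next
  fix x assume "closed C" "x \<notin> C"
  then obtain e where e: "e > 0" "\<forall>y. dist y x < e \<longrightarrow> y \<notin> C"
    by (metis closed_def open_dist ComplI ComplD)
  obtain m :: nat where m: "1 / Suc m < e"
    using reals_Archimedean e(1) by (auto simp: inverse_eq_divide)
  have "x \<in> far_from C (1 / Suc m)"
    unfolding far_from_def using e(2) m by (force simp: dist_commute not_less)
  then show "x \<in> (\<Union>m. far_from C (1 / Suc m))" by blast
qed

lemma emeasure_Diff_closed_eq_SUP:
  fixes C :: "'a::metric_space set"
  assumes "sets M = sets borel" "closed C" "B \<in> sets M"
  shows "emeasure M (B - C) = (SUP m. emeasure M (B \<inter> far_from C (1 / Suc m)))"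
proof -
  have "(SUP m. emeasure M (B \<inter> far_from C (1 / Suc m))) = emeasure M (\<Union>m. B \<inter> far_from C (1 / Suc m))"
  proof (rule SUP_emeasure_incseq)
    have "far_from C s \<in> sets M" for s
      by (simp add: assms(1) borel_open[OF open_far_from])
    then show "range (\<lambda>m. B \<inter> far_from C (1 / Suc m)) \<subseteq> sets M"
      using assms(3) by auto
    show "incseq (\<lambda>m. B \<inter> far_from C (1 / Suc m))"
      by (intro monoI Int_mono order_refl far_from_antimono) (simp add: frac_le)
  qed
  also have "(\<Union>m. B \<inter> far_from C (1 / Suc m)) = B - C"
    using UN_far_from_closed[OF assms(2)] by blast
  finally show ?thesis by simp
qed

lemma upper_integral_le_nn_integral:
  "\<phi> \<in> borel_measurable M \<Longrightarrow> (\<And>x. x \<in> space M \<Longrightarrow> f x \<le> \<phi> x) \<Longrightarrow> upper_integral M f \<le> integral\<^sup>N M \<phi>"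
  unfolding upper_integral_def by (rule INF_lower) auto

lemma upper_integral_mono:
  "(\<And>x. x \<in> space M \<Longrightarrow> f x \<le> g x) \<Longrightarrow> upper_integral M f \<le> upper_integral M g"
  unfolding upper_integral_def by (rule INF_superset_mono) (auto intro: order_trans)

lemma upper_integral_approx:
  assumes "upper_integral M f < \<top>" "e > 0"
  obtains \<phi> where "\<phi> \<in> borel_measurable M" "\<And>x. x \<in> space M \<Longrightarrow> f x \<le> \<phi> x"
    "integral\<^sup>N M \<phi> < upper_integral M f + ennreal e"
proof -
  have "upper_integral M f < upper_integral M f + ennreal e"
    using assms by (cases "upper_integral M f")
      (auto simp: ennreal_plus[symmetric] ennreal_less_iff simp del: ennreal_plus)
  then show ?thesis using that unfolding upper_integral_def[of M f] INF_less_iff by auto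
qed

text \<open>Monotone convergence for the upper integral: measurable majorants of the \<open>T m\<close> are
  replaced by their tail infima, which are increasing in \<open>m\<close>.\<close>
lemma upper_integral_SUP_le:
  fixes T :: "nat \<Rightarrow> 'a \<Rightarrow> ennreal"
  assumes inc: "\<And>m x. T m x \<le> T (Suc m) x"
  shows "upper_integral M (\<lambda>x. SUP m. T m x) \<le> (SUP m. upper_integral M (T m))"
proof (rule ennreal_le_epsilon)
  fix e :: real assume fin: "(SUP m. upper_integral M (T m)) < \<top>" and e: "0 < e"
  have "\<exists>\<phi>\<in>borel_measurable M. (\<forall>x\<in>space M. T m x \<le> \<phi> x) \<and>
      integral\<^sup>N M \<phi> < upper_integral M (T m) + ennreal e" for m
  proof -
    have "upper_integral M (T m) < \<top>"
      using fin SUP_upper[of m UNIV "\<lambda>m. upper_integral M (T m)"] by auto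
    then show ?thesis using e by (metis upper_integral_approx)
  qed
  then obtain \<phi> where \<phi>: "\<And>m. \<phi> m \<in> borel_measurable M" "\<And>m x. x \<in> space M \<Longrightarrow> T m x \<le> \<phi> m x"
    "\<And>m. integral\<^sup>N M (\<phi> m) < upper_integral M (T m) + ennreal e"
    by metis
  define \<psi> where "\<psi> m x = (INF k\<in>{m..}. \<phi> k x)" for m x
  have \<psi>_meas: "\<psi> m \<in> borel_measurable M" for m
    unfolding \<psi>_def by (rule borel_measurable_INF) (auto intro: \<phi>(1))
  have "T m x \<le> \<psi> m x" if "x \<in> space M" for m x
    unfolding \<psi>_def using lift_Suc_mono_le[of "\<lambda>m. T m x", OF inc] \<phi>(2)[OF that]
    by (auto intro!: INF_greatest intro: order_trans)
  then have "upper_integral M (\<lambda>x. SUP m. T m x) \<le> integral\<^sup>N M (\<lambda>x. SUP m. \<psi> m x)"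
    using \<psi>_meas by (intro upper_integral_le_nn_integral SUP_mono) auto
  also have "\<dots> = (SUP m. integral\<^sup>N M (\<psi> m))"
  proof (rule nn_integral_monotone_convergence_SUP[OF _ \<psi>_meas])
    show "incseq \<psi>"
      unfolding incseq_def le_fun_def \<psi>_def by (auto intro!: INF_superset_mono)
  qed
  also have "\<dots> \<le> (SUP m. upper_integral M (T m)) + ennreal e"
  proof (rule SUP_least)
    fix m
    have "integral\<^sup>N M (\<psi> m) \<le> integral\<^sup>N M (\<phi> m)"
      by (rule nn_integral_mono) (auto simp: \<psi>_def intro: INF_lower)
    also have "\<dots> \<le> upper_integral M (T m) + ennreal e" using \<phi>(3)[of m] by simp
    also have "\<dots> \<le> (SUP m. upper_integral M (T m)) + ennreal e"
      by (intro add_mono SUP_upper) auto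
    finally show "integral\<^sup>N M (\<psi> m) \<le> (SUP m. upper_integral M (T m)) + ennreal e" .
  qed
  finally show "upper_integral M (\<lambda>x. SUP m. T m x) \<le> (SUP m. upper_integral M (T m)) + ennreal e" .
qed

lemma nn_integral_SUP_indicator_decseq_le:
  fixes a :: "nat \<Rightarrow> real"
  assumes "decseq C" "mono a" "\<And>j. C j \<in> sets M"
  shows "(\<integral>\<^sup>+x. (SUP j. ennreal (a j) * indicator (C j) x) \<partial>M)
    \<le> (\<Sum>j. ennreal (a j) * emeasure M (C j - C (Suc j))) + \<top> * emeasure M (\<Inter>j. C j)"
proof -
  have D: "C j - C (Suc j) \<in> sets M" for j using assms(3) by auto
  have N: "(\<Inter>j. C j) \<in> sets M" using assms(3) by auto
  have "(\<integral>\<^sup>+x. (SUP j. ennreal (a j) * indicator (C j) x) \<partial>M)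
    \<le> (\<integral>\<^sup>+x. (\<Sum>j. ennreal (a j) * indicator (C j - C (Suc j)) x) + \<top> * indicator (\<Inter>j. C j) x \<partial>M)"
    by (intro nn_integral_mono SUP_indicator_decseq_le assms(1,2))
  also have "\<dots> = (\<Sum>j. \<integral>\<^sup>+x. ennreal (a j) * indicator (C j - C (Suc j)) x \<partial>M)
      + (\<integral>\<^sup>+x. \<top> * indicator (\<Inter>j. C j) x \<partial>M)"
    using D N by (simp add: nn_integral_add borel_measurable_suminf_order nn_integral_suminf)
  also have "\<dots> = (\<Sum>j. ennreal (a j) * emeasure M (C j - C (Suc j))) + \<top> * emeasure M (\<Inter>j. C j)"
    using D N by (simp add: nn_integral_cmult_indicator)
  finally show ?thesis .
qed

lemma sets_packing_measure [simp]: "sets (packing_measure h \<Delta>) = sets borel"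
  unfolding packing_measure_def by (simp add: sets_measure_of_conv sets.sigma_sets_eq[of borel, simplified])

text \<open>If \<open>packing_outer\<close> fails to be a measure on the Borel sets, \<open>measure_of\<close> yields the
  zero measure, so the following bound holds in either case.\<close>
lemma emeasure_packing_measure_le:
  "emeasure (packing_measure h \<Delta> :: 'a::metric_space measure) B \<le> pack_zero h \<Delta> dist B"
proof -
  have "emeasure (packing_measure h \<Delta> :: 'a measure) B \<le> packing_outer h \<Delta> dist B"
    unfolding packing_measure_def by (simp add: emeasure_measure_of_conv sets.sigma_sets_eq[of borel, simplified])
  then show ?thesis using packing_outer_le_pack_zero order_trans by blast
qed

lemma emeasure_closure_Int_open_le:
  fixes M :: "'a::metric_space measure"
  assumes M: "sets M = sets borel" "\<And>B. B \<in> sets borel \<Longrightarrow> emeasure M B \<le> pack_zero h \<Delta> dist B"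
    and "open U"
  shows "emeasure M (closure A \<inter> U) \<le> pack_zero h \<Delta> dist (A \<inter> U)"
proof -
  have "emeasure M (closure A \<inter> U) \<le> pack_zero h \<Delta> dist (closure A \<inter> U)"
    using \<open>open U\<close> by (intro M(2) sets.Int borel_closed borel_open) auto
  also have "\<dots> \<le> pack_zero h \<Delta> dist (A \<inter> U)"
    using open_Int_closure_subset[OF \<open>open U\<close>, of A] by (intro pack_zero_closure) (auto simp: Int_commute)
  finally show ?thesis .
qed

section \<open>Integrating functions with a packing bound\<close>

definition packing_bound :: "(real \<Rightarrow> real) \<Rightarrow> real set \<Rightarrow> ('a::metric_space \<Rightarrow> ennreal) \<Rightarrow> ennreal \<Rightarrow> bool"
  where "packing_bound h \<Delta> T K \<longleftrightarrow> (\<forall>\<epsilon>>0. \<exists>\<eta>>0. \<forall>S r. finite S \<and> is_packing dist S r \<and>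
      (\<forall>x\<in>S. r x \<in> \<Delta> \<and> r x \<le> \<eta>) \<longrightarrow> (\<Sum>x\<in>S. T x * ennreal (h (r x))) \<le> K + ennreal \<epsilon>)"

lemma packing_boundD:
  assumes "packing_bound h \<Delta> T K" "\<epsilon> > 0"
  obtains \<eta> where "\<eta> > 0" "\<And>S r. finite S \<Longrightarrow> is_packing dist S r \<Longrightarrow> \<forall>x\<in>S. r x \<in> \<Delta> \<and> r x \<le> \<eta>
    \<Longrightarrow> (\<Sum>x\<in>S. T x * ennreal (h (r x))) \<le> K + ennreal \<epsilon>"
  using assms unfolding packing_bound_def by meson

lemma packing_bound_mono:
  assumes "packing_bound h \<Delta> T K" "\<And>x. T' x \<le> T x" "K \<le> K'"
  shows "packing_bound h \<Delta> T' K'"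
  unfolding packing_bound_def
proof (intro allI impI)
  fix \<epsilon> :: real assume "\<epsilon> > 0"
  then obtain \<eta> where \<eta>: "\<eta> > 0" "\<And>S r. finite S \<Longrightarrow> is_packing dist S r \<Longrightarrow> \<forall>x\<in>S. r x \<in> \<Delta> \<and> r x \<le> \<eta>
    \<Longrightarrow> (\<Sum>x\<in>S. T x * ennreal (h (r x))) \<le> K + ennreal \<epsilon>"
    using packing_boundD[OF assms(1)] by blast
  have "(\<Sum>x\<in>S. T' x * ennreal (h (r x))) \<le> K' + ennreal \<epsilon>"
    if "finite S" "is_packing dist S r" "\<forall>x\<in>S. r x \<in> \<Delta> \<and> r x \<le> \<eta>" for S r
  proof -
    have "(\<Sum>x\<in>S. T' x * ennreal (h (r x))) \<le> (\<Sum>x\<in>S. T x * ennreal (h (r x)))"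
      by (intro sum_mono mult_right_mono assms(2)) simp
    also have "\<dots> \<le> K' + ennreal \<epsilon>"
      using \<eta>(2)[OF that] assms(3) by (meson add_right_mono order_trans)
    finally show ?thesis .
  qed
  with \<eta>(1) show "\<exists>\<eta>>0. \<forall>S r. finite S \<and> is_packing dist S r \<and> (\<forall>x\<in>S. r x \<in> \<Delta> \<and> r x \<le> \<eta>)
      \<longrightarrow> (\<Sum>x\<in>S. T' x * ennreal (h (r x))) \<le> K' + ennreal \<epsilon>"
    by blast
qed

lemma sum_separated_packings_le:
  fixes T :: "'a::metric_space \<Rightarrow> ennreal" and F S :: "'i \<Rightarrow> 'a set"
  assumes bound: "\<And>F r. finite F \<Longrightarrow> is_packing dist F r \<Longrightarrow> \<forall>x\<in>F. r x \<in> \<Delta> \<and> r x \<le> \<eta>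
      \<Longrightarrow> (\<Sum>x\<in>F. T x * ennreal (h (r x))) \<le> B"
    and "finite I" and level: "\<And>i x. i \<in> I \<Longrightarrow> x \<in> S i \<Longrightarrow> ennreal (a i) < T x"
    and "s \<ge> 0" and sep: "\<And>i j x y. i \<in> I \<Longrightarrow> j \<in> I \<Longrightarrow> i \<noteq> j \<Longrightarrow> x \<in> S i \<Longrightarrow> y \<in> S j \<Longrightarrow> s < dist x y"
    and F: "\<And>i. i \<in> I \<Longrightarrow> finite (F i)" "\<And>i. i \<in> I \<Longrightarrow> is_packing dist (F i) (R i)"
      "\<And>i. i \<in> I \<Longrightarrow> F i \<subseteq> S i" "\<And>i x. i \<in> I \<Longrightarrow> x \<in> F i \<Longrightarrow> R i x \<in> \<Delta> \<and> R i x \<le> min \<eta> s"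
  shows "(\<Sum>i\<in>I. ennreal (a i) * (\<Sum>x\<in>F i. ennreal (h (R i x)))) \<le> B"
proof -
  have sepF: "s < dist x y" if "i \<in> I" "j \<in> I" "i \<noteq> j" "x \<in> F i" "y \<in> F j" for i j x y
    using sep F(3) that by blast
  obtain r where packing: "is_packing dist (\<Union>i\<in>I. F i) r"
    and r: "\<And>i x. i \<in> I \<Longrightarrow> x \<in> F i \<Longrightarrow> r x = R i x"
    by (rule is_packing_UN_separated[of I F s R, OF sepF \<open>s \<ge> 0\<close> F(2)]) (use F(4) in auto)
  have "(\<Sum>i\<in>I. ennreal (a i) * (\<Sum>x\<in>F i. ennreal (h (R i x))))
      \<le> (\<Sum>i\<in>I. \<Sum>x\<in>F i. T x * ennreal (h (r x)))"
    unfolding sum_distrib_left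
  proof (intro sum_mono)
    fix i x assume ix: "i \<in> I" "x \<in> F i"
    then have "ennreal (a i) \<le> T x" using level F(3) by (meson less_imp_le subsetD)
    then show "ennreal (a i) * ennreal (h (R i x)) \<le> T x * ennreal (h (r x))"
      using r[OF ix] by (simp add: mult_right_mono)
  qed
  also have "\<dots> = (\<Sum>x\<in>(\<Union>i\<in>I. F i). T x * ennreal (h (r x)))"
  proof (rule sum.UNION_disjoint[symmetric])
    show "\<forall>i\<in>I. \<forall>j\<in>I. i \<noteq> j \<longrightarrow> F i \<inter> F j = {}"
      using separated_family_disjoint[of s I F] \<open>s \<ge> 0\<close> sepF by fastforce
  qed (use \<open>finite I\<close> F(1) in auto)
  also have "\<dots> \<le> B"
    using \<open>finite I\<close> F(1,4) r by (intro bound packing) fastforce+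
  finally show ?thesis .
qed

lemma packing_bound_separated:
  fixes T :: "'a::metric_space \<Rightarrow> ennreal" and S :: "'i \<Rightarrow> 'a set"
  assumes bound: "packing_bound h \<Delta> T K" and "finite I"
    and level: "\<And>i x. i \<in> I \<Longrightarrow> x \<in> S i \<Longrightarrow> ennreal (a i) < T x"
    and "s > 0"
    and sep: "\<And>i j x y. i \<in> I \<Longrightarrow> j \<in> I \<Longrightarrow> i \<noteq> j \<Longrightarrow> x \<in> S i \<Longrightarrow> y \<in> S j \<Longrightarrow> s < dist x y"
  shows "(\<Sum>i\<in>I. ennreal (a i) * pack_zero h \<Delta> dist (S i)) \<le> K"
proof (rule ennreal_le_epsilon)
  fix \<epsilon> :: real assume "0 < \<epsilon>"
  then obtain \<eta> where \<eta>: "\<eta> > 0" "\<And>F r. finite F \<Longrightarrow> is_packing dist F r \<Longrightarrow> \<forall>x\<in>F. r x \<in> \<Delta> \<and> r x \<le> \<eta>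
    \<Longrightarrow> (\<Sum>x\<in>F. T x * ennreal (h (r x))) \<le> K + ennreal \<epsilon>"
    using packing_boundD[OF bound] by blast
  define P where "P i = {(F, r). finite F \<and> is_packing dist F r \<and> F \<subseteq> S i \<and>
    (\<forall>x\<in>F. r x \<in> \<Delta> \<and> r x \<le> min \<eta> s)}" for i
  have "(\<Sum>i\<in>I. ennreal (a i) * pack_zero h \<Delta> dist (S i))
      \<le> (\<Sum>i\<in>I. ennreal (a i) * pack_delta h \<Delta> dist (min \<eta> s) (S i))"
    using \<eta>(1) \<open>s > 0\<close> by (intro sum_mono mult_left_mono pack_zero_le_pack_delta) auto
  also have "\<dots> = (\<Sum>i\<in>I. SUP (F, r)\<in>P i. ennreal (a i) * (\<Sum>x\<in>F. ennreal (h (r x))))"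
    unfolding pack_delta_eq_SUP_finite P_def by (simp add: SUP_mult_left_ennreal case_prod_beta)
  also have "\<dots> \<le> K + ennreal \<epsilon>"
  proof (rule sum_SUP_le_ennreal[OF \<open>finite I\<close>])
    show "P i \<noteq> {}" for i
      using P_def by (auto simp: is_packing_def intro!: exI[of _ "({}, \<lambda>_. 1)"])
  next
    fix p assume p: "\<And>i. i \<in> I \<Longrightarrow> p i \<in> P i"
    have "(\<Sum>i\<in>I. ennreal (a i) * (\<Sum>x\<in>fst (p i). ennreal (h (snd (p i) x)))) \<le> K + ennreal \<epsilon>"
    proof (rule sum_separated_packings_le[where F="\<lambda>i. fst (p i)" and R="\<lambda>i. snd (p i)" and S=S and s=s and \<eta>=\<eta>])
      show "\<And>F r. finite F \<Longrightarrow> is_packing dist F r \<Longrightarrow> \<forall>x\<in>F. r x \<in> \<Delta> \<and> r x \<le> \<eta>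
          \<Longrightarrow> (\<Sum>x\<in>F. T x * ennreal (h (r x))) \<le> K + ennreal \<epsilon>"
        by (rule \<eta>(2))
    qed (use \<open>finite I\<close> level \<open>s > 0\<close> sep p in \<open>auto simp: P_def case_prod_beta\<close>)
    then show "(\<Sum>i\<in>I. case p i of (F, r) \<Rightarrow> ennreal (a i) * (\<Sum>x\<in>F. ennreal (h (r x)))) \<le> K + ennreal \<epsilon>"
      by (simp add: case_prod_beta)
  qed
  finally show "(\<Sum>i\<in>I. ennreal (a i) * pack_zero h \<Delta> dist (S i)) \<le> K + ennreal \<epsilon>" .
qed

lemma packing_bound_level:
  "packing_bound h \<Delta> T K \<Longrightarrow> (\<And>x. x \<in> A \<Longrightarrow> ennreal a < T x) \<Longrightarrow> ennreal a * pack_zero h \<Delta> dist A \<le> K"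
  using packing_bound_separated[of h \<Delta> T K "{()}" "\<lambda>_. A" "\<lambda>_. a" 1] by auto

lemma far_from_levels_separated:
  fixes A :: "nat \<Rightarrow> 'a::metric_space set"
  assumes "\<And>i j. i \<le> j \<Longrightarrow> A j \<subseteq> A i" "i \<noteq> j"
    and "x \<in> A i \<inter> far_from (closure (A (Suc i))) s" "y \<in> A j \<inter> far_from (closure (A (Suc j))) s"
  shows "s < dist x y"
proof -
  have far: "s < dist x y" if "i < j" "x \<in> far_from (closure (A (Suc i))) s" "y \<in> A j" for i j x y
    using that assms(1)[of "Suc i" j] closure_subset[of "A (Suc i)"]
    by (intro far_from_dist[of x "closure (A (Suc i))"]) auto
  show ?thesis
    using assms(2-) far[of i j x y] far[of j i y x] by (cases "i < j") (auto simp: dist_commute)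
qed

lemma sum_level_layers_le:
  fixes M :: "'a::metric_space measure" and T :: "'a \<Rightarrow> ennreal" and l :: "nat \<Rightarrow> real"
  assumes M: "sets M = sets borel" "\<And>B. B \<in> sets borel \<Longrightarrow> emeasure M B \<le> pack_zero h \<Delta> dist B"
    and bound: "packing_bound h \<Delta> T K" and "mono l"
  shows "(\<Sum>j. ennreal (l j) * emeasure M
     (closure {x. ennreal (l j) < T x} - closure {x. ennreal (l (Suc j)) < T x})) \<le> K"
proof -
  define A where "A j = {x. ennreal (l j) < T x}" for j
  define C where "C j = closure (A j)" for j
  define U where "U m j = far_from (C (Suc j)) (1 / Suc m)" for m j :: nat
  have C_sets: "C j \<in> sets M" for j
    unfolding C_def M(1) by (rule borel_closed) simp
  have U_sets: "U m j \<in> sets M" for m j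
    unfolding U_def M(1) by (rule borel_open[OF open_far_from])
  have approx: "emeasure M (C j - C (Suc j)) = (SUP m. emeasure M (C j \<inter> U m j))" for j
    unfolding U_def using C_sets by (intro emeasure_Diff_closed_eq_SUP[OF M(1)]) (auto simp: C_def)
  have "(\<Sum>j<n. SUP m. ennreal (l j) * emeasure M (C j \<inter> U m j)) \<le> K" for n
  proof (rule sum_SUP_le_ennreal)
    fix p :: "nat \<Rightarrow> nat"
    define m0 where "m0 = (\<Sum>j<n. p j)"
    have "emeasure M (C j \<inter> U (p j) j) \<le> pack_zero h \<Delta> dist (A j \<inter> U m0 j)" if "j < n" for j
    proof -
      have "p j \<le> m0" unfolding m0_def using that by (intro member_le_sum) auto
      then have "U (p j) j \<subseteq> U m0 j" unfolding U_def by (intro far_from_antimono) (simp add: frac_le)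
      then have "emeasure M (C j \<inter> U (p j) j) \<le> emeasure M (C j \<inter> U m0 j)"
        using C_sets U_sets by (intro emeasure_mono) auto
      also have "\<dots> \<le> pack_zero h \<Delta> dist (A j \<inter> U m0 j)"
        unfolding C_def U_def by (rule emeasure_closure_Int_open_le[OF M open_far_from])
      finally show ?thesis .
    qed
    then have "(\<Sum>j<n. ennreal (l j) * emeasure M (C j \<inter> U (p j) j))
        \<le> (\<Sum>j<n. ennreal (l j) * pack_zero h \<Delta> dist (A j \<inter> U m0 j))"
      by (intro sum_mono mult_left_mono) auto
    also have "\<dots> \<le> K"
    proof (rule packing_bound_separated[OF bound])
      show "1 / Suc m0 < dist x y"
        if "i \<noteq> j" "x \<in> A i \<inter> U m0 i" "y \<in> A j \<inter> U m0 j" for i j x y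
        using that unfolding U_def C_def
        by (rule far_from_levels_separated[rotated]) (simp add: A_def level_sets_antimono \<open>mono l\<close>)
    qed (auto simp: A_def)
    finally show "(\<Sum>j<n. ennreal (l j) * emeasure M (C j \<inter> U (p j) j)) \<le> K" .
  qed auto
  then have "(\<Sum>j<n. ennreal (l j) * emeasure M (C j - C (Suc j))) \<le> K" for n
    by (simp add: approx SUP_mult_left_ennreal)
  then show ?thesis
    unfolding suminf_eq_SUP A_def C_def by (intro SUP_least)
qed

lemma emeasure_INT_level_closures_eq_0:
  fixes M :: "'a::metric_space measure" and T :: "'a \<Rightarrow> ennreal"
  assumes M: "sets M = sets borel" "\<And>B. B \<in> sets borel \<Longrightarrow> emeasure M B \<le> pack_zero h \<Delta> dist B"
    and bound: "packing_bound h \<Delta> T K" and "K < \<top>" and "c > 0" "q > 1"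
  shows "emeasure M (\<Inter>j. closure {x. ennreal (c * q ^ j) < T x}) = 0"
proof (rule ennreal_eq_0_of_geometric_bound[OF \<open>c > 0\<close> \<open>q > 1\<close> \<open>K < \<top>\<close>])
  fix j
  let ?A = "{x. ennreal (c * q ^ j) < T x}"
  have "emeasure M (\<Inter>j. closure {x. ennreal (c * q ^ j) < T x}) \<le> pack_zero h \<Delta> dist (closure ?A)"
    by (intro order_trans[OF emeasure_mono M(2)]) (auto simp: M(1))
  also have "\<dots> \<le> pack_zero h \<Delta> dist ?A"
    by (rule pack_zero_closure) simp
  finally have "ennreal (c * q ^ j) * emeasure M (\<Inter>j. closure {x. ennreal (c * q ^ j) < T x})
      \<le> ennreal (c * q ^ j) * pack_zero h \<Delta> dist ?A"
    by (rule mult_left_mono) simp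
  also have "\<dots> \<le> K"
    by (rule packing_bound_level[OF bound]) simp
  finally show "ennreal (c * q ^ j) * emeasure M (\<Inter>j. closure {x. ennreal (c * q ^ j) < T x}) \<le> K" .
qed

lemma upper_integral_le_level_closures:
  fixes M :: "'a::metric_space measure" and T :: "'a \<Rightarrow> ennreal"
  assumes "sets M = sets borel" "c > 0" "q > 1" and T: "\<And>x. T x = 0 \<or> ennreal c < T x"
  shows "upper_integral M T
    \<le> (\<integral>\<^sup>+x. (SUP j. ennreal (c * q ^ Suc j) * indicator (closure {y. ennreal (c * q ^ j) < T y}) x) \<partial>M)"
proof (rule upper_integral_le_nn_integral)
  show "(\<lambda>x. SUP j. ennreal (c * q ^ Suc j) * indicator (closure {y. ennreal (c * q ^ j) < T y}) x)
      \<in> borel_measurable M"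
  proof (rule borel_measurable_SUP)
    have "closure {y. ennreal (c * q ^ j) < T y} \<in> sets M" for j
      using assms(1) by (simp add: borel_closed)
    then show "(\<lambda>x. ennreal (c * q ^ Suc j) * indicator (closure {y. ennreal (c * q ^ j) < T y}) x)
        \<in> borel_measurable M" for j
      by measurable
  qed simp
  fix x
  have "T x \<le> (SUP j. ennreal (c * q ^ Suc j) * indicator {y. ennreal (c * q ^ j) < T y} x)"
    using \<open>c > 0\<close> \<open>q > 1\<close> T by (rule le_SUP_geometric_indicator)
  also have "\<dots> \<le> (SUP j. ennreal (c * q ^ Suc j) * indicator (closure {y. ennreal (c * q ^ j) < T y}) x)"
    by (intro SUP_mono' mult_left_mono indicator_leI) (auto intro: closure_subset[THEN subsetD])
  finally show "T x \<le> (SUP j. ennreal (c * q ^ Suc j) * indicator (closure {y. ennreal (c * q ^ j) < T y}) x)" .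
qed

lemma upper_integral_le_geometric:
  fixes M :: "'a::metric_space measure" and T :: "'a \<Rightarrow> ennreal"
  assumes M: "sets M = sets borel" "\<And>B. B \<in> sets borel \<Longrightarrow> emeasure M B \<le> pack_zero h \<Delta> dist B"
    and bound: "packing_bound h \<Delta> T K" and "K < \<top>" and "c > 0" "q > 1"
    and T: "\<And>x. T x = 0 \<or> ennreal c < T x"
  shows "upper_integral M T \<le> ennreal q * K"
proof -
  define C where "C j = closure {x. ennreal (c * q ^ j) < T x}" for j
  have mono_level: "mono (\<lambda>j. c * q ^ j)"
    using \<open>c > 0\<close> \<open>q > 1\<close> by (intro monoI mult_left_mono power_increasing) auto
  have "mono (\<lambda>j. c * q ^ Suc j)"
    using monoD[OF mono_level, of "Suc _" "Suc _"] by (intro monoI) (simp del: power_Suc)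
  moreover have "decseq C"
    unfolding C_def decseq_def using closure_mono level_sets_antimono[where T=T, OF mono_level] by blast
  moreover have "C j \<in> sets M" for j
    unfolding C_def M(1) by (rule borel_closed) simp
  ultimately have "(\<integral>\<^sup>+x. (SUP j. ennreal (c * q ^ Suc j) * indicator (C j) x) \<partial>M)
      \<le> (\<Sum>j. ennreal (c * q ^ Suc j) * emeasure M (C j - C (Suc j))) + \<top> * emeasure M (\<Inter>j. C j)"
    by (intro nn_integral_SUP_indicator_decseq_le)
  also have "\<dots> = ennreal q * (\<Sum>j. ennreal (c * q ^ j) * emeasure M (C j - C (Suc j)))"
  proof -
    have "ennreal (c * q ^ Suc j) = ennreal q * ennreal (c * q ^ j)" for j
      using \<open>c > 0\<close> \<open>q > 1\<close> by (simp add: ennreal_mult[symmetric] mult.left_commute)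
    then have "(\<Sum>j. ennreal (c * q ^ Suc j) * emeasure M (C j - C (Suc j)))
      = (\<Sum>j. ennreal q * (ennreal (c * q ^ j) * emeasure M (C j - C (Suc j))))"
      by (simp only: mult.assoc)
    moreover have "emeasure M (\<Inter>j. C j) = 0"
      unfolding C_def
      using emeasure_INT_level_closures_eq_0[OF M bound \<open>K < \<top>\<close> \<open>c > 0\<close> \<open>q > 1\<close>] .
    ultimately show ?thesis by (simp only: ennreal_suminf_cmult mult_zero_right add_0_right)
  qed
  also have "\<dots> \<le> ennreal q * K"
    using sum_level_layers_le[OF M bound mono_level] by (simp add: C_def mult_left_mono)
  finally have "(\<integral>\<^sup>+x. (SUP j. ennreal (c * q ^ Suc j) * indicator (C j) x) \<partial>M) \<le> ennreal q * K" .
  with upper_integral_le_level_closures[of M c q T, OF M(1) \<open>c > 0\<close> \<open>q > 1\<close> T] show ?thesis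
    unfolding C_def by (rule order_trans)
qed

text \<open>Cutting \<open>T\<close> off below \<open>1/(n+1)\<close> leaves a function that is \<open>0\<close> or above \<open>c = 1/(n+1)\<close>,
  as \<open>upper_integral_le_geometric\<close> requires; these truncations increase to \<open>T\<close>.\<close>
lemma upper_integral_le_packing_bound:
  fixes M :: "'a::metric_space measure" and T :: "'a \<Rightarrow> ennreal"
  assumes M: "sets M = sets borel" "\<And>B. B \<in> sets borel \<Longrightarrow> emeasure M B \<le> pack_zero h \<Delta> dist B"
    and bound: "packing_bound h \<Delta> T K"
  shows "upper_integral M T \<le> K"
proof (cases "K = \<top>")
  case False
  define Tn where "Tn n x = (if ennreal (1 / Suc n) < T x then T x else 0)" for n x
  have "Tn n x \<le> Tn (Suc n) x" for n x
  proof -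
    have "ennreal (1 / Suc (Suc n)) \<le> ennreal (1 / Suc n)" by (rule ennreal_leI) (simp add: frac_le)
    then have "ennreal (1 / Suc (Suc n)) < T x" if "ennreal (1 / Suc n) < T x"
      using that by (rule order.strict_trans1)
    then show ?thesis unfolding Tn_def by simp
  qed
  then have SUP_le: "upper_integral M (\<lambda>x. SUP n. Tn n x) \<le> (SUP n. upper_integral M (Tn n))"
    by (rule upper_integral_SUP_le)
  have level: "upper_integral M (Tn n) \<le> ennreal q * K" if "q > 1" for n q
  proof (rule upper_integral_le_geometric[OF M _ _ _ that])
    show "packing_bound h \<Delta> (Tn n) K" by (rule packing_bound_mono[OF bound]) (auto simp: Tn_def)
    show "K < \<top>" using False by (simp add: less_top)
    show "0 < 1 / real (Suc n)" by simp
    show "Tn n x = 0 \<or> ennreal (1 / Suc n) < Tn n x" for x by (simp add: Tn_def)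
  qed
  show ?thesis
  proof (rule ennreal_le_of_le_mult)
    fix q :: real assume "q > 1"
    have "(\<lambda>x. SUP n. Tn n x) = T"
      unfolding Tn_def SUP_truncate_below_ennreal ..
    then have "upper_integral M T = upper_integral M (\<lambda>x. SUP n. Tn n x)" by simp
    also have "\<dots> \<le> ennreal q * K"
      using SUP_le level[OF \<open>q > 1\<close>] by (meson SUP_least order_trans)
    finally show "upper_integral M T \<le> ennreal q * K" .
  qed
qed simp

section \<open>Box counting on sections\<close>

definition lower_box_approx :: "(real \<Rightarrow> real) \<Rightarrow> ('a \<Rightarrow> 'a \<Rightarrow> real) \<Rightarrow> nat \<Rightarrow> 'a set \<Rightarrow> ennreal" where
  "lower_box_approx g d m F = (INF \<delta>\<in>{0<..<1 / Suc m}. Cdelta d \<delta> F * ennreal (g \<delta>))"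

lemma lower_box_approx_mono:
  assumes "m \<le> m'" "F \<subseteq> F'"
  shows "lower_box_approx g d m F \<le> lower_box_approx g d m' F'"
  unfolding lower_box_approx_def
proof (rule INF_superset_mono)
  show "{0<..<1 / real (Suc m')} \<subseteq> {0<..<1 / real (Suc m)}"
    using assms(1) by (auto simp: frac_le order.strict_trans2)
qed (simp add: mult_right_mono Cdelta_mono assms(2))

lemma lower_box0_le_SUP_approx: "lower_box0 g d F \<le> (SUP m. lower_box_approx g d m F)"
  unfolding lower_box0_def Liminf_def
proof (rule SUP_least, clarify)
  fix P assume "eventually P (at_right (0::real))"
  then obtain b where b: "b > 0" "\<And>y. y > 0 \<Longrightarrow> y < b \<Longrightarrow> P y"
    by (auto simp: eventually_at_right_field)
  obtain m :: nat where "1 / Suc m < b"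
    using reals_Archimedean b(1) by (auto simp: inverse_eq_divide)
  then have "(INF \<delta>\<in>{\<delta>. P \<delta>}. Cdelta d \<delta> F * ennreal (g \<delta>)) \<le> lower_box_approx g d m F"
    unfolding lower_box_approx_def using b(2) by (intro INF_superset_mono) auto
  also have "\<dots> \<le> (SUP m. lower_box_approx g d m F)" by (rule SUP_upper) simp
  finally show "(INF \<delta>\<in>{\<delta>. P \<delta>}. Cdelta d \<delta> F * ennreal (g \<delta>)) \<le> (SUP m. lower_box_approx g d m F)" .
qed

lemma upper_box_reg_le_SUP_approx:
  assumes "incseq F" "(\<Union>m. F m) = E"
  shows "upper_box_reg g d E \<le> (SUP m. lower_box_approx g d m (F m))"
proof -
  have "upper_box_reg g d E \<le> (SUP n. lower_box0 g d (F n))"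
    unfolding upper_box_reg_def using assms by (intro INF_lower) simp
  also have "\<dots> \<le> (SUP n. SUP m. lower_box_approx g d m (F n))"
    by (intro SUP_mono') (rule lower_box0_le_SUP_approx)
  also have "\<dots> \<le> (SUP m. lower_box_approx g d m (F m))"
  proof (intro SUP_least)
    fix n m
    have "lower_box_approx g d m (F n) \<le> lower_box_approx g d (max n m) (F (max n m))"
      using incseqD[OF assms(1)] by (intro lower_box_approx_mono) auto
    then show "lower_box_approx g d m (F n) \<le> (SUP m. lower_box_approx g d m (F m))"
      by (rule SUP_upper2[OF UNIV_I])
  qed
  finally show ?thesis .
qed

lemma sum_Cdelta_sections_le_pack_delta:
  fixes G :: "('a::metric_space \<times> 'b::metric_space) set"
  assumes S: "finite S" "is_packing dist S r" "\<forall>x\<in>S. r x \<in> \<Delta> \<and> r x \<le> \<delta>"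
  shows "(\<Sum>x\<in>S. Cdelta dist (r x) (section_set G x) * ennreal (f (r x))) \<le> pack_delta f \<Delta> max_dist \<delta> G"
proof -
  define Fam where "Fam x = {F. finite F \<and> F \<subseteq> section_set G x \<and> ereal (r x) < gap dist F}" for x
  have "(\<Sum>x\<in>S. Cdelta dist (r x) (section_set G x) * ennreal (f (r x)))
      = (\<Sum>x\<in>S. SUP F\<in>Fam x. of_nat (card F) * ennreal (f (r x)))"
    by (simp add: Cdelta_eq_SUP_finite Fam_def SUP_mult_right_ennreal)
  also have "\<dots> \<le> pack_delta f \<Delta> max_dist \<delta> G"
  proof (rule sum_SUP_le_ennreal[OF S(1)])
    show "Fam x \<noteq> {}" for x
      by (auto simp: Fam_def gap_empty intro!: exI[of _ "{}"])
  next
    fix p assume p: "\<And>x. x \<in> S \<Longrightarrow> p x \<in> Fam x"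
    then have "\<And>x. x \<in> S \<Longrightarrow> ereal (r x) < gap dist (p x)" by (auto simp: Fam_def)
    note packing = is_packing_Sigma[OF S(2) this]
    have "(\<Sum>x\<in>S. of_nat (card (p x)) * ennreal (f (r x))) = (\<Sum>x\<in>S. \<Sum>y\<in>p x. ennreal (f (r x)))"
      by simp
    also have "\<dots> = (\<Sum>z\<in>Sigma S p. ennreal (f ((r \<circ> fst) z)))"
      by (subst sum.Sigma) (use S(1) p in \<open>auto simp: Fam_def case_prod_beta\<close>)
    also have "\<dots> \<le> pack_delta f \<Delta> max_dist \<delta> G"
      using S p packing by (intro sum_le_pack_delta) (auto simp: Fam_def section_set_def comp_def)
    finally show "(\<Sum>x\<in>S. of_nat (card (p x)) * ennreal (f (r x))) \<le> pack_delta f \<Delta> max_dist \<delta> G" .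
  qed
  finally show ?thesis .
qed

lemma sum_lower_box_approx_le_pack_delta:
  fixes G :: "('a::metric_space \<times> 'b::metric_space) set"
  assumes g: "hausdorff_function g" and h: "hausdorff_function h"
    and S: "finite S" "is_packing dist S r" "\<forall>x\<in>S. r x \<in> \<Delta> \<and> r x \<le> \<delta> \<and> r x < 1 / Suc m"
  shows "(\<Sum>x\<in>S. lower_box_approx g dist m (section_set G x) * ennreal (h (r x)))
    \<le> pack_delta (\<lambda>t. g t * h t) \<Delta> max_dist \<delta> G"
proof -
  have "lower_box_approx g dist m (section_set G x) * ennreal (h (r x))
      \<le> Cdelta dist (r x) (section_set G x) * ennreal (g (r x) * h (r x))" if "x \<in> S" for x
  proof -
    have "r x > 0" using S(2) that by (auto simp: is_packing_def)
    then have "lower_box_approx g dist m (section_set G x) \<le> Cdelta dist (r x) (section_set G x) * ennreal (g (r x))"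
      unfolding lower_box_approx_def using S(3) that by (intro INF_lower) auto
    then have "lower_box_approx g dist m (section_set G x) * ennreal (h (r x))
        \<le> Cdelta dist (r x) (section_set G x) * ennreal (g (r x)) * ennreal (h (r x))"
      by (rule mult_right_mono) simp
    moreover have "g (r x) \<ge> 0" "h (r x) \<ge> 0"
      using g h \<open>r x > 0\<close> by (auto simp: hausdorff_function_def less_imp_le)
    ultimately show ?thesis by (simp add: ennreal_mult mult.assoc)
  qed
  then have "(\<Sum>x\<in>S. lower_box_approx g dist m (section_set G x) * ennreal (h (r x)))
      \<le> (\<Sum>x\<in>S. Cdelta dist (r x) (section_set G x) * ennreal (g (r x) * h (r x)))"
    by (rule sum_mono)
  also have "\<dots> \<le> pack_delta (\<lambda>t. g t * h t) \<Delta> max_dist \<delta> G"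
    by (rule sum_Cdelta_sections_le_pack_delta[OF S(1,2)]) (use S(3) in auto)
  finally show ?thesis .
qed

lemma lower_box_approx_packing_bound:
  fixes G :: "('a::metric_space \<times> 'b::metric_space) set"
  assumes "hausdorff_function g" "hausdorff_function h"
  shows "packing_bound h \<Delta> (\<lambda>x. lower_box_approx g dist m (section_set G x))
    (pack_zero (\<lambda>t. g t * h t) \<Delta> max_dist G)"
    (is "packing_bound h \<Delta> ?T ?P")
  unfolding packing_bound_def
proof (intro allI impI)
  fix \<epsilon> :: real assume "\<epsilon> > 0"
  show "\<exists>\<eta>>0. \<forall>S r. finite S \<and> is_packing dist S r \<and> (\<forall>x\<in>S. r x \<in> \<Delta> \<and> r x \<le> \<eta>)
      \<longrightarrow> (\<Sum>x\<in>S. ?T x * ennreal (h (r x))) \<le> ?P + ennreal \<epsilon>"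
  proof (cases "?P = \<top>")
    case False
    then have "?P < ?P + ennreal \<epsilon>"
      using \<open>\<epsilon> > 0\<close> by (cases ?P) (auto simp: ennreal_plus[symmetric] ennreal_less_iff simp del: ennreal_plus)
    then obtain \<delta> where \<delta>: "\<delta> > 0" "pack_delta (\<lambda>t. g t * h t) \<Delta> max_dist \<delta> G < ?P + ennreal \<epsilon>"
      unfolding pack_zero_def[of _ _ _ G] INF_less_iff by auto
    define \<eta> where "\<eta> = min \<delta> (1 / Suc (Suc m))"
    have \<eta>: "\<eta> > 0" "\<eta> \<le> \<delta>" "\<eta> < 1 / Suc m"
    proof -
      have "1 / real (Suc (Suc m)) < 1 / Suc m" by (rule frac_less2) auto
      then show "\<eta> > 0" "\<eta> \<le> \<delta>" "\<eta> < 1 / Suc m" using \<delta>(1) by (auto simp: \<eta>_def)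
    qed
    have "(\<Sum>x\<in>S. ?T x * ennreal (h (r x))) \<le> ?P + ennreal \<epsilon>"
      if "finite S" "is_packing dist S r" "\<forall>x\<in>S. r x \<in> \<Delta> \<and> r x \<le> \<eta>" for S r
      using sum_lower_box_approx_le_pack_delta[OF assms that(1,2), of \<Delta> \<delta> m G] that(3) \<eta> \<delta>(2)
      by fastforce
    with \<eta>(1) show ?thesis by blast
  qed (auto intro: exI[of _ 1])
qed

theorem theorem3p4:
  fixes g h :: "real \<Rightarrow> real" and \<Delta> :: "real set"
    and E :: "('a::metric_space \<times> 'b::metric_space) set"
  assumes "is_scale \<Delta>" and "hausdorff_function g" and "hausdorff_function h"
  shows "packing_outer (\<lambda>t. g t * h t) \<Delta> max_dist E
         \<ge> upper_integral (packing_measure h \<Delta>) (\<lambda>x. upper_box_reg g dist (section_set E x))"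
  unfolding packing_outer_def
proof (rule INF_greatest, clarify)
  fix En :: "nat \<Rightarrow> ('a \<times> 'b) set" assume cover: "E \<subseteq> (\<Union>n. En n)"
  let ?M = "packing_measure h \<Delta> :: 'a measure"
  define G where "G m = E \<inter> (\<Union>n<Suc m. En n)" for m
  define T where "T m x = lower_box_approx g dist m (section_set (G m) x)" for m x
  have sections: "incseq (\<lambda>m. section_set (G m) x)" "(\<Union>m. section_set (G m) x) = section_set E x" for x
    using cover by (fastforce simp: G_def section_set_def incseq_def)+
  have "T m x \<le> T (Suc m) x" for m x
    unfolding T_def using incseqD[OF sections(1)] by (intro lower_box_approx_mono) auto
  then have "upper_integral ?M (\<lambda>x. SUP m. T m x) \<le> (SUP m. upper_integral ?M (T m))"
    by (rule upper_integral_SUP_le)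
  also have "\<dots> \<le> (\<Sum>n. pack_zero (\<lambda>t. g t * h t) \<Delta> max_dist (En n))"
  proof (rule SUP_least, rule upper_integral_le_packing_bound)
    fix m
    have "pack_zero (\<lambda>t. g t * h t) \<Delta> max_dist (G m) \<le> (\<Sum>n<Suc m. pack_zero (\<lambda>t. g t * h t) \<Delta> max_dist (En n))"
      unfolding G_def by (rule order_trans[OF pack_zero_mono pack_zero_UN_lessThan]) simp
    also have "\<dots> \<le> (\<Sum>n. pack_zero (\<lambda>t. g t * h t) \<Delta> max_dist (En n))"
      by (rule sum_le_suminf) auto
    finally show "packing_bound h \<Delta> (T m) (\<Sum>n. pack_zero (\<lambda>t. g t * h t) \<Delta> max_dist (En n))"
      unfolding T_def
      by (rule packing_bound_mono[OF lower_box_approx_packing_bound[OF assms(2,3)] order_refl])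
  qed (auto intro: emeasure_packing_measure_le)
  finally show "upper_integral ?M (\<lambda>x. upper_box_reg g dist (section_set E x))
      \<le> (\<Sum>n. pack_zero (\<lambda>t. g t * h t) \<Delta> max_dist (En n))"
    using upper_integral_mono[of ?M "\<lambda>x. upper_box_reg g dist (section_set E x)" "\<lambda>x. SUP m. T m x"]
      upper_box_reg_le_SUP_approx[OF sections] by (auto simp: T_def order_trans)
qed

end
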